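(* Let $f\colon X\to X$ be a homeomorphism of a metric space $X$ and $\mu$ a Borel probability measure inner-distal with respect to $f$. If $f$ is asymptotically expansive, then $\mu$ is positively meagre-expansive. If $f$ is bi-asymptotically expansive, then $\mu$ is meagre-expansive.
   Context: $\mathcal{P}(x)=\{y\colon \inf_{n\in\mathbb{Z}} d(f^n(x),f^n(y))=0\}$; $\mu$ is inner-distal if $\mu(\operatorname{Int}\mathcal{P}(x))=0$ for all $x$. $f$ is asymptotically expansive if there is $\delta>0$ such that $d(f^n(x),f^n(y))\le\delta$ for all $n\ge0$ implies $\lim_{n\to\infty}d(f^n(x),f^n(y))=0$; $f$ is bi-asymptotically expansive if $f$ and $f^{-1}$ are asymptotically expansive. $\Gamma^+_\delta(x)=\{y\colon d(f^n(x),f^n(y))\le\delta\ \forall n\ge0\}$ and $\Gamma_\delta(x)=\{y\colon d(f^n(x),f^n(y))\le\delta\ \forall n\in\mathbb{Z}\}$. $\mu$ is positively meagre-expansive (resp. meagre-expansive) if there is $\delta>0$ with $\mu(\operatorname{Int}\Gamma^+_\delta(x))=0$ (resp. $\mu(\operatorname{Int}\Gamma_\delta(x))=0$) for all $x\in X$. *)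

theory Defs
  imports "HOL-Analysis.Analysis" "HOL-Probability.Probability"
begin

definition iter_int :: "('a \<Rightarrow> 'a) \<Rightarrow> int \<Rightarrow> 'a \<Rightarrow> 'a" where
  "iter_int f n = (if 0 \<le> n then f ^^ nat n else (inv f) ^^ nat (- n))"

definition homeo :: "('a::metric_space \<Rightarrow> 'a) \<Rightarrow> bool" where
  "homeo f \<longleftrightarrow> bij f \<and> continuous_on UNIV f \<and> continuous_on UNIV (inv f)"

definition proximal_cell :: "('a::metric_space \<Rightarrow> 'a) \<Rightarrow> 'a \<Rightarrow> 'a set" where
  "proximal_cell f x = {y. (INF n::int. dist (iter_int f n x) (iter_int f n y)) = 0}"

definition inner_distal :: "'a::metric_space measure \<Rightarrow> ('a \<Rightarrow> 'a) \<Rightarrow> bool" where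
  "inner_distal M f \<longleftrightarrow> (\<forall>x. measure M (interior (proximal_cell f x)) = 0)"

definition asymp_expansive :: "('a::metric_space \<Rightarrow> 'a) \<Rightarrow> bool" where
  "asymp_expansive f \<longleftrightarrow> (\<exists>\<delta>>0. \<forall>x y.
      (\<forall>n::nat. dist ((f ^^ n) x) ((f ^^ n) y) \<le> \<delta>) \<longrightarrow>
      (\<lambda>n. dist ((f ^^ n) x) ((f ^^ n) y)) \<longlonglongrightarrow> 0)"

definition bi_asymp_expansive :: "('a::metric_space \<Rightarrow> 'a) \<Rightarrow> bool" where
  "bi_asymp_expansive f \<longleftrightarrow> asymp_expansive f \<and> asymp_expansive (inv f)"

definition Gamma_plus :: "('a::metric_space \<Rightarrow> 'a) \<Rightarrow> real \<Rightarrow> 'a \<Rightarrow> 'a set" where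
  "Gamma_plus f \<delta> x = {y. \<forall>n::nat. dist ((f ^^ n) x) ((f ^^ n) y) \<le> \<delta>}"

definition Gamma :: "('a::metric_space \<Rightarrow> 'a) \<Rightarrow> real \<Rightarrow> 'a \<Rightarrow> 'a set" where
  "Gamma f \<delta> x = {y. \<forall>n::int. dist (iter_int f n x) (iter_int f n y) \<le> \<delta>}"

definition pos_meagre_expansive :: "'a::metric_space measure \<Rightarrow> ('a \<Rightarrow> 'a) \<Rightarrow> bool" where
  "pos_meagre_expansive M f \<longleftrightarrow>
     (\<exists>\<delta>>0. \<forall>x. measure M (interior (Gamma_plus f \<delta> x)) = 0)"

definition meagre_expansive :: "'a::metric_space measure \<Rightarrow> ('a \<Rightarrow> 'a) \<Rightarrow> bool" where
  "meagre_expansive M f \<longleftrightarrow>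
     (\<exists>\<delta>>0. \<forall>x. measure M (interior (Gamma f \<delta> x)) = 0)"

end

theory Submission
  imports Defs
begin

text \<open>If \<open>\<delta>\<close> is an asymptotic expansivity constant of \<open>f\<close>, every point of
  \<open>\<Gamma>\<^sup>+\<^sub>\<delta>(x)\<close> is forward asymptotic to \<open>x\<close>, hence proximal to it, so
  \<open>\<Gamma>\<^sub>\<delta>(x) \<subseteq> \<Gamma>\<^sup>+\<^sub>\<delta>(x) \<subseteq> \<P>(x)\<close>. Taking interiors and measures,
  inner-distality passes to both dynamical balls.\<close>

lemma iter_int_of_nat [simp]: "iter_int f (int n) = f ^^ n"
  by (simp add: iter_int_def)

lemma Gamma_subset_Gamma_plus: "Gamma f \<delta> x \<subseteq> Gamma_plus f \<delta> x"
  unfolding Gamma_def Gamma_plus_def by (auto dest: spec[of _ "int _"])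

lemma asymptotic_imp_proximal:
  assumes "(\<lambda>n. dist ((f ^^ n) x) ((f ^^ n) y)) \<longlonglongrightarrow> 0"
  shows "y \<in> proximal_cell f x"
proof -
  let ?d = "\<lambda>n::int. dist (iter_int f n x) (iter_int f n y)"
  have bdd: "bdd_below (range ?d)"
    by (rule bdd_belowI[of _ 0]) auto
  have "(INF n. ?d n) \<le> dist ((f ^^ k) x) ((f ^^ k) y)" for k
    using cINF_lower[OF bdd, of "int k"] by simp
  then have "(INF n. ?d n) \<le> 0"
    using assms by (intro LIMSEQ_le_const) auto
  moreover have "0 \<le> (INF n. ?d n)"
    by (rule cINF_greatest) auto
  ultimately show ?thesis
    unfolding proximal_cell_def by simp
qed

lemma asymp_expansive_Gamma_plus_subset_proximal_cell:
  assumes "asymp_expansive f"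
  obtains \<delta> where "\<delta> > 0" "\<And>x. Gamma_plus f \<delta> x \<subseteq> proximal_cell f x"
proof -
  obtain \<delta> where "\<delta> > 0" and \<delta>: "\<And>x y. (\<forall>n. dist ((f ^^ n) x) ((f ^^ n) y) \<le> \<delta>) \<Longrightarrow>
      (\<lambda>n. dist ((f ^^ n) x) ((f ^^ n) y)) \<longlonglongrightarrow> 0"
    using assms unfolding asymp_expansive_def by blast
  have "Gamma_plus f \<delta> x \<subseteq> proximal_cell f x" for x
    unfolding Gamma_plus_def by (auto intro: asymptotic_imp_proximal \<delta>)
  with \<open>\<delta> > 0\<close> show thesis by (rule that)
qed

lemma finite_measure_interior_null_mono:
  assumes "finite_measure M" "sets M = sets borel" "A \<subseteq> B"
    and "measure M (interior B) = 0"
  shows "measure M (interior A) = 0"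
proof -
  interpret finite_measure M by fact
  have "measure M (interior A) \<le> measure M (interior B)"
    using assms(2,3) by (intro finite_measure_mono interior_mono) simp_all
  with assms(4) show ?thesis
    using measure_nonneg[of M "interior A"] by linarith
qed

theorem lemma3p6:
  fixes f :: "'a::metric_space \<Rightarrow> 'a" and M :: "'a measure"
  assumes "homeo f"
    and "prob_space M" and "sets M = sets borel"
    and "inner_distal M f"
  shows "(asymp_expansive f \<longrightarrow> pos_meagre_expansive M f)
       \<and> (bi_asymp_expansive f \<longrightarrow> meagre_expansive M f)"
proof -
  have "pos_meagre_expansive M f \<and> meagre_expansive M f" if expansive: "asymp_expansive f"
  proof -
    obtain \<delta> where "\<delta> > 0" and Gamma_plus_proximal:
        "\<And>x. Gamma_plus f \<delta> x \<subseteq> proximal_cell f x"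
      using asymp_expansive_Gamma_plus_subset_proximal_cell[OF expansive] by blast
    have fin: "finite_measure M"
      using \<open>prob_space M\<close> by (rule prob_space.finite_measure)
    have Gamma_plus_null: "measure M (interior (Gamma_plus f \<delta> x)) = 0" for x
      using finite_measure_interior_null_mono[OF fin \<open>sets M = sets borel\<close> Gamma_plus_proximal]
        \<open>inner_distal M f\<close> by (simp add: inner_distal_def)
    have "measure M (interior (Gamma f \<delta> x)) = 0" for x
      using finite_measure_interior_null_mono[OF fin \<open>sets M = sets borel\<close>
          Gamma_subset_Gamma_plus Gamma_plus_null] .
    with Gamma_plus_null \<open>\<delta> > 0\<close> show ?thesis
      unfolding pos_meagre_expansive_def meagre_expansive_def by blast
  qed
  then show ?thesis
    unfolding bi_asymp_expansive_def by blast
qed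

end
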